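(* Let $\Omega$ be a symmetric oval with $f,g,a,b,\kappa$ as in the context, and define $$A(x)=f(x)-\sqrt{\frac{2}{\kappa(a,0)}(a-x)},\qquad B(y)=g(y)-\sqrt{\frac{2}{\kappa(0,b)}(b-y)}.$$ Then $A'(x)=O(\sqrt{a-x})$ as $x\nearrow a$, and in particular $A'(a)=0$. Moreover $A''(x)=O\big(1/\sqrt{a-x}\big)$ as $x\nearrow a$, and in particular $A''$ is integrable on $(0,a)$. Likewise $B'(b)=0$ and $B''$ is integrable on $(0,b)$.
   Context: A symmetric oval: $\Omega\subset\mathbb{R}^2$ compact convex, with smooth boundary $\partial\Omega$ of nowhere vanishing curvature, symmetric under $(x,y)\mapsto(\pm x,\pm y)$. Let $\partial\Omega$ meet the axes at $(\pm a,0)$ and $(0,\pm b)$, $a,b>0$. Write $\partial\Omega\cap\{y>0\}=\{(x,f(x)):|x|\le a\}$ with $f$ even, smooth, $f(a)=0$, $f(0)=b$, decreasing on $(0,a)$, $f''<0$; and $\partial\Omega\cap\{x>0\}=\{(g(y),y):|y|\le b\}$ where $g$ is even and on $[0,b]$ is the inverse function of $f|_{[0,a]}$. $\kappa(x,y)$ denotes the curvature of $\partial\Omega$ at $(x,y)\in\partial\Omega$. *)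

theory Defs
  imports "HOL-Analysis.Analysis" "HOL-Library.Landau_Symbols"
begin

definition smooth_on :: "real set \<Rightarrow> (real \<Rightarrow> real) \<Rightarrow> bool" where
  "smooth_on S h \<longleftrightarrow> (\<forall>n. \<forall>x\<in>S. ((deriv ^^ n) h) differentiable (at x))"

definition graph_curv :: "(real \<Rightarrow> real) \<Rightarrow> real \<Rightarrow> real" where
  "graph_curv h t = \<bar>deriv (deriv h) t\<bar> / (1 + (deriv h t)\<^sup>2) powr (3/2)"

text \<open>A symmetric oval, described by its boundary functions f (upper arc y = f x)
  and g (right arc x = g y) with axis intercepts a, b, as in the paper's setup.\<close>
definition symmetric_oval :: "(real \<Rightarrow> real) \<Rightarrow> (real \<Rightarrow> real) \<Rightarrow> real \<Rightarrow> real \<Rightarrow> bool" where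
  "symmetric_oval f g a b \<longleftrightarrow>
     0 < a \<and> 0 < b \<and>
     (\<forall>x\<in>{-a..a}. f (-x) = f x) \<and>
     (\<forall>y\<in>{-b..b}. g (-y) = g y) \<and>
     continuous_on {-a..a} f \<and> continuous_on {-b..b} g \<and>
     f a = 0 \<and> f 0 = b \<and>
     (\<forall>x y. 0 \<le> x \<and> x < y \<and> y \<le> a \<longrightarrow> f y < f x) \<and>
     (\<forall>x\<in>{0..a}. g (f x) = x) \<and>
     (\<forall>y\<in>{0..b}. g y \<in> {0..a} \<and> f (g y) = y) \<and>
     smooth_on {-a<..<a} f \<and> smooth_on {-b<..<b} g \<and>
     (\<forall>x\<in>{-a<..<a}. deriv (deriv f) x < 0) \<and>
     (\<forall>y\<in>{-b<..<b}. deriv (deriv g) y < 0)"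

definition kappa_a0 :: "(real \<Rightarrow> real) \<Rightarrow> real" where
  "kappa_a0 g = graph_curv g 0"
definition kappa_0b :: "(real \<Rightarrow> real) \<Rightarrow> real" where
  "kappa_0b f = graph_curv f 0"

end

theory Submission
  imports Defs
begin

(* Near the vertex (a,0) the boundary is the graph x = g y of an even function with
   g''(0) = -k < 0, where k is the curvature there.  Taylor's theorem gives
   g y = a - k/2 y^2 + O(y^4), g' y = -k y + O(y^3) and g'' y = -k + O(y^2), and differentiating
   g (f x) = x gives f' = 1 / g'(f) and f'' = -g''(f) / g'(f)^3.  With y = f x and
   S = sqrt (2/k (a - x)) one gets S = y + O(y^3); comparing with S' = -1/(k S) and
   S'' = -1/(k^2 S^3) shows A' = O(y) and A'' = O(1/y), and y is comparable to S.
   Since A is continuous at a and A' tends to 0 there, the mean value theorem gives A'(a) = 0,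
   and A'' is continuous on [0,a) with the integrable majorant 1/sqrt(a - x) near a.
   B is the same function for the other vertex, with the roles of f and g exchanged. *)

lemma smooth_on_has_real_derivative:
  assumes "smooth_on S h" "x \<in> S"
  shows "((deriv^^n) h has_real_derivative (deriv^^(Suc n)) h x) (at x)"
  using assms unfolding smooth_on_def by (simp add: DERIV_deriv_iff_real_differentiable)

lemma has_real_derivative_parity:
  fixes h :: "real \<Rightarrow> real"
  assumes par: "\<And>x. x \<in> {-r<..<r} \<Longrightarrow> h (-x) = s * h x"
    and der: "\<And>x. x \<in> {-r<..<r} \<Longrightarrow> (h has_real_derivative h' x) (at x)"
    and x: "x \<in> {-r<..<r}"
  shows "h' (-x) = - s * h' x"
proof -
  have "((\<lambda>t. h (-t)) has_real_derivative h' (-x) * (-1)) (at x)"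
    using DERIV_chain2[OF der[of "-x"] DERIV_minus[OF DERIV_ident]] x by auto
  then have "((\<lambda>t. s * h t) has_real_derivative h' (-x) * (-1)) (at x)"
    by (rule has_field_derivative_transform_within_open[of _ _ _ "{-r<..<r}"]) (use x par in auto)
  moreover have "((\<lambda>t. s * h t) has_real_derivative s * h' x) (at x)"
    using der x by (auto intro!: derivative_eq_intros)
  ultimately show ?thesis using DERIV_unique by fastforce
qed

lemma smooth_even_deriv_iterate_parity:
  assumes "smooth_on {-r<..<r} g" and even: "\<And>y. y \<in> {-r<..<r} \<Longrightarrow> g (-y) = g y"
    and "y \<in> {-r<..<r}"
  shows "(deriv^^n) g (-y) = (-1)^n * (deriv^^n) g y"
  using \<open>y \<in> {-r<..<r}\<close>
proof (induction n arbitrary: y)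
  case 0
  then show ?case using even by simp
next
  case (Suc n)
  show ?case
    using has_real_derivative_parity[OF Suc.IH smooth_on_has_real_derivative[OF assms(1)] Suc.prems]
    by simp
qed

lemma smooth_even_odd_deriv_zero:
  assumes "0 < r" "smooth_on {-r<..<r} g" "\<And>y. y \<in> {-r<..<r} \<Longrightarrow> g (-y) = g y" "odd n"
  shows "(deriv^^n) g 0 = 0"
  using smooth_even_deriv_iterate_parity[where r = r and g = g, OF assms(2,3), of 0 n] assms(1,4) by simp

lemma mvt_power_bound:
  fixes h h' :: "real \<Rightarrow> real"
  assumes "h 0 = 0" "0 \<le> K"
    and der: "\<And>s. s \<in> {0..t} \<Longrightarrow> (h has_real_derivative h' s) (at s)"
    and bound: "\<And>s. s \<in> {0<..<t} \<Longrightarrow> \<bar>h' s\<bar> \<le> K * s^n"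
    and "0 \<le> t"
  shows "\<bar>h t\<bar> \<le> K * t^(Suc n)"
proof (cases "t = 0")
  case True
  then show ?thesis using assms by simp
next
  case False
  then obtain z where z: "0 < z" "z < t" "h t - h 0 = (t - 0) * h' z"
    using MVT2[of 0 t h h'] der \<open>0 \<le> t\<close> by force
  have "\<bar>h' z\<bar> \<le> K * t^n"
    using bound[of z] z \<open>0 \<le> K\<close> by (smt (verit) greaterThanLessThan_iff mult_left_mono power_mono)
  then show ?thesis using z \<open>h 0 = 0\<close> by (simp add: abs_mult mult.left_commute mult_left_mono)
qed

lemma even_smooth_taylor_bounds:
  fixes g :: "real \<Rightarrow> real"
  assumes "0 < r" and smooth: "smooth_on {-r<..<r} g" and even: "\<And>y. y \<in> {-r<..<r} \<Longrightarrow> g (-y) = g y"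
  obtains d K where "0 < d" "d < r"
    "\<And>y. y \<in> {0<..<d} \<Longrightarrow> \<bar>g y - g 0 - deriv (deriv g) 0 / 2 * y^2\<bar> \<le> K * y^4"
    "\<And>y. y \<in> {0<..<d} \<Longrightarrow> \<bar>deriv g y - deriv (deriv g) 0 * y\<bar> \<le> K * y^3"
    "\<And>y. y \<in> {0<..<d} \<Longrightarrow> \<bar>deriv (deriv g) y - deriv (deriv g) 0\<bar> \<le> K * y^2"
proof -
  define D where "D n = (deriv^^n) g" for n
  have D_odd: "D 1 0 = 0" "D 3 0 = 0"
    using smooth_even_odd_deriv_zero[where r = r and g = g, OF assms, of 1]
      smooth_even_odd_deriv_zero[where r = r and g = g, OF assms, of 3]
    by (simp_all add: D_def)
  define d where "d = r / 2"
  have d: "0 < d" "d < r" using \<open>0 < r\<close> by (auto simp: d_def)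
  have der: "(D n has_real_derivative D (n + 1) s) (at s)" if "s \<in> {0..d}" for n s
    unfolding D_def using smooth_on_has_real_derivative[OF smooth] that d by simp
  have "continuous_on {0..d} (\<lambda>s. \<bar>D 4 s\<bar>)"
    using der[THEN DERIV_isCont] by (intro continuous_intros continuous_at_imp_continuous_on) blast
  then obtain m where m: "\<And>s. s \<in> {0..d} \<Longrightarrow> \<bar>D 4 s\<bar> \<le> \<bar>D 4 m\<bar>"
    using continuous_attains_sup[OF compact_Icc] d by (metis empty_iff)
  define K where "K = \<bar>D 4 m\<bar>"
  have K: "0 \<le> K" by (simp add: K_def)
  \<comment> \<open>Integrate the bound on the fourth derivative four times; the odd derivatives vanish at 0.\<close>
  have B3: "\<bar>D 3 t\<bar> \<le> K * t ^ Suc 0" if "t \<in> {0..d}" for t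
  proof (rule mvt_power_bound[where h' = "D 4" and n = 0])
    show "(D 3 has_real_derivative D 4 s) (at s)" if "s \<in> {0..t}" for s
      using der[of s 3] that \<open>t \<in> {0..d}\<close> by simp
  qed (use D_odd K m that in \<open>auto simp: K_def\<close>)
  have B2: "\<bar>D 2 t - D 2 0\<bar> \<le> K * t ^ Suc 1" if "t \<in> {0..d}" for t
  proof (rule mvt_power_bound[where h' = "D 3" and n = 1])
    show "((\<lambda>s. D 2 s - D 2 0) has_real_derivative D 3 s) (at s)" if "s \<in> {0..t}" for s
      using der[of s 2] that \<open>t \<in> {0..d}\<close> by (auto intro!: derivative_eq_intros)
  qed (use B3 K that in auto)
  have B1: "\<bar>D 1 t - D 2 0 * t\<bar> \<le> K * t ^ Suc 2" if "t \<in> {0..d}" for t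
  proof (rule mvt_power_bound[where h' = "\<lambda>s. D 2 s - D 2 0" and n = 2])
    show "((\<lambda>s. D 1 s - D 2 0 * s) has_real_derivative D 2 s - D 2 0) (at s)" if "s \<in> {0..t}" for s
      using der[of s 1] that \<open>t \<in> {0..d}\<close> by (auto intro!: derivative_eq_intros simp: numeral_2_eq_2)
  qed (use B2 D_odd K that in \<open>auto simp: power2_eq_square\<close>)
  have B0: "\<bar>D 0 t - D 0 0 - D 2 0 / 2 * t^2\<bar> \<le> K * t ^ Suc 3" if "t \<in> {0..d}" for t
  proof (rule mvt_power_bound[where h' = "\<lambda>s. D 1 s - D 2 0 * s" and n = 3])
    show "((\<lambda>s. D 0 s - D 0 0 - D 2 0 / 2 * s^2) has_real_derivative D 1 s - D 2 0 * s) (at s)"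
      if "s \<in> {0..t}" for s
      using der[of s 0] that \<open>t \<in> {0..d}\<close> by (auto intro!: derivative_eq_intros)
  qed (use B1 K that in auto)
  show thesis
    by (rule that[OF d, of K]) (use B0 B1 B2 in \<open>auto simp: D_def eval_nat_numeral\<close>)
qed

lemma has_real_derivative_at_left_of_deriv_limit:
  fixes F F' :: "real \<Rightarrow> real"
  assumes "p < q" and cont: "(F \<longlongrightarrow> F q) (at_left q)"
    and der: "\<And>x. x \<in> {p<..<q} \<Longrightarrow> (F has_real_derivative F' x) (at x)"
    and lim: "(F' \<longlongrightarrow> L) (at_left q)"
  shows "(F has_real_derivative L) (at_left q)"
  unfolding has_field_derivative_iff tendsto_iff
proof (intro allI impI)
  fix e :: real assume "0 < e"
  then obtain p' where p': "p' < q" "\<And>z. p' < z \<Longrightarrow> z < q \<Longrightarrow> dist (F' z) L < e"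
    using lim unfolding tendsto_iff eventually_at_left_field by blast
  have "dist ((F y - F q) / (y - q)) L < e" if y: "max p p' < y" "y < q" for y
  proof -
    have "continuous_on {y..q} F"
    proof (intro continuous_on_eq_continuous_within[THEN iffD2] ballI)
      fix x assume x: "x \<in> {y..q}"
      show "continuous (at x within {y..q}) F"
      proof (cases "x = q")
        case True
        then show ?thesis using cont y(2) by (simp add: continuous_within at_within_Icc_at_left)
      next
        case False
        then have "x \<in> {p<..<q}" using x y by auto
        then show ?thesis
          using der DERIV_isCont continuous_at_imp_continuous_at_within by blast
      qed
    qed
    moreover have "F differentiable (at x)" if "y < x" "x < q" for x
      using der[of x] that y real_differentiable_def by auto
    ultimately obtain l z where z: "y < z" "z < q" "(F has_real_derivative l) (at z)"
      and mvt: "F q - F y = (q - y) * l"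
      using MVT[OF y(2)] by blast
    have "l = F' z" using DERIV_unique[OF z(3) der] z y by auto
    then have "(F y - F q) / (y - q) = F' z" using mvt y by (simp add: field_simps)
    then show ?thesis using p' z y by auto
  qed
  then show "\<forall>\<^sub>F y in at_left q. dist ((F y - F q) / (y - q)) L < e"
    unfolding eventually_at_left_field using \<open>p < q\<close> p' by (intro exI[of _ "max p p'"]) auto
qed

lemma inverse_function_derivatives:
  fixes f g f' g' :: "real \<Rightarrow> real"
  assumes "open U" "x \<in> U"
    and inv: "\<And>t. t \<in> U \<Longrightarrow> g (f t) = t"
    and df: "\<And>t. t \<in> U \<Longrightarrow> (f has_real_derivative f' t) (at t)"
    and dg: "\<And>t. t \<in> U \<Longrightarrow> (g has_real_derivative g' (f t)) (at (f t))"
    and df': "(f' has_real_derivative f'') (at x)"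
    and dg': "(g' has_real_derivative g'') (at (f x))"
  shows "f' x = inverse (g' (f x))" "f'' = - g'' / (g' (f x))^3"
proof -
  have product: "g' (f t) * f' t = 1" if "t \<in> U" for t
  proof (rule DERIV_unique)
    show "((\<lambda>s. g (f s)) has_real_derivative g' (f t) * f' t) (at t)"
      using DERIV_chain2[OF dg[OF that] df[OF that]] .
    show "((\<lambda>s. g (f s)) has_real_derivative 1) (at t)"
      by (rule has_field_derivative_transform_within_open[of "\<lambda>s. s" _ _ U])
        (use assms(1) that inv in auto)
  qed
  then have f'_eq: "f' t = inverse (g' (f t))" if "t \<in> U" for t
    using that by (metis inverse_unique)
  then show "f' x = inverse (g' (f x))" using assms(2) .
  have nz: "g' (f x) \<noteq> 0" using product[OF assms(2)] by auto
  have "((\<lambda>t. inverse (g' (f t))) has_real_derivative - (g'' * f' x * inverse (g' (f x) ^ 2))) (at x)"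
    using DERIV_inverse_fun[OF DERIV_chain2[OF dg' df[OF assms(2)]] nz] by (simp add: power2_eq_square)
  then have "(f' has_real_derivative - (g'' * f' x * inverse (g' (f x) ^ 2))) (at x)"
    by (rule has_field_derivative_transform_within_open[OF _ assms(1,2)]) (simp add: f'_eq)
  then have "f'' = - (g'' * f' x * inverse (g' (f x) ^ 2))" using df' DERIV_unique by blast
  then show "f'' = - g'' / (g' (f x))^3"
    using f'_eq[OF assms(2)] nz by (simp add: field_simps power3_eq_cube power2_eq_square)
qed

lemma sqrt_affine_derivatives:
  fixes c a x :: real
  assumes "0 < c" "x < a"
  shows "((\<lambda>t. sqrt (c * (a - t))) has_real_derivative - c / (2 * sqrt (c * (a - x)))) (at x)"
    and "((\<lambda>t. c / (2 * sqrt (c * (a - t)))) has_real_derivative c^2 / (4 * sqrt (c * (a - x))^3)) (at x)"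
proof -
  have pos: "0 < c * (a - x)" using assms by simp
  show "((\<lambda>t. sqrt (c * (a - t))) has_real_derivative - c / (2 * sqrt (c * (a - x)))) (at x)"
    using pos by (auto intro!: derivative_eq_intros simp: divide_simps)
  show "((\<lambda>t. c / (2 * sqrt (c * (a - t)))) has_real_derivative c^2 / (4 * sqrt (c * (a - x))^3)) (at x)"
    using pos by (auto intro!: derivative_eq_intros simp: divide_simps power2_eq_square power3_eq_cube)
qed

lemma inverse_sqrt_integrable_on:
  fixes p q :: real
  assumes "p < q"
  shows "(\<lambda>x. 1 / sqrt (q - x)) integrable_on {p<..<q}"
proof -
  have "((\<lambda>x. - 2 * sqrt (q - x)) has_vector_derivative 1 / sqrt (q - x)) (at x)"
    if "x \<in> {p<..<q}" for x
    using that unfolding has_real_derivative_iff_has_vector_derivative[symmetric]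
    by (auto intro!: derivative_eq_intros simp: field_simps)
  then have "((\<lambda>x. 1 / sqrt (q - x)) has_integral (- 2 * sqrt (q - q) - - 2 * sqrt (q - p))) {p..q}"
    using assms by (intro fundamental_theorem_of_calculus_interior continuous_intros) auto
  then show ?thesis by (auto simp: integrable_on_Icc_iff_Ioo[symmetric])
qed

lemma absolutely_integrable_on_Ioo_if_bigo_inverse_sqrt:
  fixes h :: "real \<Rightarrow> real"
  assumes "p < q" and cont: "continuous_on {p..<q} h"
    and bigo: "h \<in> O[at_left q](\<lambda>x. 1 / sqrt (q - x))"
  shows "h absolutely_integrable_on {p<..<q}"
proof -
  obtain C where "C > 0" and "\<forall>\<^sub>F x in at_left q. norm (h x) \<le> C * norm (1 / sqrt (q - x))"
    using bigo by (elim landau_o.bigE)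
  then obtain q0 where q0: "q0 < q" "\<And>x. q0 < x \<Longrightarrow> x < q \<Longrightarrow> \<bar>h x\<bar> \<le> C * (1 / sqrt (q - x))"
    unfolding eventually_at_left_field by auto
  define q1 where "q1 = max p q0"
  have "continuous_on {p..q1} (\<lambda>x. \<bar>h x\<bar>)"
    using cont q0 \<open>p < q\<close> by (intro continuous_intros continuous_on_subset[OF cont]) (auto simp: q1_def)
  then obtain m where m: "\<And>x. x \<in> {p..q1} \<Longrightarrow> \<bar>h x\<bar> \<le> \<bar>h m\<bar>"
    using continuous_attains_sup[OF compact_Icc] \<open>p < q\<close> q0 unfolding q1_def
    by (metis empty_iff)
  have bound: "norm (h x) \<le> \<bar>h m\<bar> + C * (1 / sqrt (q - x))" if "x \<in> {p<..<q}" for x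
  proof (cases "x \<le> q1")
    case True
    have "0 \<le> C * (1 / sqrt (q - x))" using that \<open>C > 0\<close> by auto
    then show ?thesis using m[of x] that True by auto
  next
    case False
    then have "\<bar>h x\<bar> \<le> C * (1 / sqrt (q - x))" using q0(2)[of x] that by (auto simp: q1_def)
    then show ?thesis by (smt (verit) abs_ge_zero real_norm_def)
  qed
  have "(\<lambda>x. \<bar>h m\<bar> + C * (1 / sqrt (q - x))) integrable_on {p<..<q}"
    using integrable_cmul[OF inverse_sqrt_integrable_on[OF \<open>p < q\<close>], of C] \<open>p < q\<close>
    by (intro integrable_add) (auto simp: integrable_on_Icc_iff_Ioo[symmetric])
  moreover have "h \<in> borel_measurable (lebesgue_on {p<..<q})"
    by (rule continuous_imp_measurable_on_sets_lebesgue[OF continuous_on_subset[OF cont]]) auto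
  ultimately show ?thesis
    using bound by (intro measurable_bounded_by_integrable_imp_absolutely_integrable) auto
qed

lemma abs_divide_le_divide:
  fixes n d B L :: real
  assumes "\<bar>n\<bar> \<le> B" "L \<le> \<bar>d\<bar>" "0 < L"
  shows "\<bar>n / d\<bar> \<le> B / L"
  using assms by (simp add: frac_le)

lemma sqrt_quadratic_approx:
  fixes k K c y x a :: real
  assumes "0 < k" "c * k = 2" "0 < y"
    and quad: "\<bar>x - a + k / 2 * y^2\<bar> \<le> K * y^4" and small: "c * K * y^2 \<le> 1/2"
  defines "S \<equiv> sqrt (c * (a - x))"
  shows "0 < a - x" "y / 2 \<le> S" "S \<le> 2 * y" "\<bar>y - S\<bar> \<le> c * K * y^3"
proof -
  have c: "0 < c" using assms(1,2) by (metis zero_less_mult_pos2 zero_less_numeral)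
  define E where "E = c * (x - a + k / 2 * y^2)"
  have S2: "c * (a - x) = y^2 - E" unfolding E_def using assms(2) by (simp add: algebra_simps)
  have E_le: "\<bar>E\<bar> \<le> c * K * y^4"
    unfolding E_def using quad c by (simp add: abs_mult mult_left_mono)
  also have "\<dots> = (c * K * y^2) * y^2" by (simp add: power_def numeral_eq_Suc algebra_simps)
  also have "\<dots> \<le> 1/2 * y^2" using small by (intro mult_right_mono) auto
  finally have "\<bar>E\<bar> \<le> 1/2 * y^2" .
  then have lower: "(y / 2)^2 \<le> c * (a - x)" and upper: "c * (a - x) \<le> (2 * y)^2"
    using S2 by (auto simp: power_mult_distrib power_divide)
  have "0 < (y / 2)^2" using \<open>0 < y\<close> by simp
  then have "0 < c * (a - x)" using lower by linarith
  then show "0 < a - x" using c by (simp add: zero_less_mult_iff)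
  show lo: "y / 2 \<le> S" unfolding S_def using lower by (rule real_le_rsqrt)
  show "S \<le> 2 * y" unfolding S_def using upper \<open>0 < y\<close> by (intro real_le_lsqrt) auto
  have "S^2 = c * (a - x)" unfolding S_def using \<open>0 < c * (a - x)\<close> by simp
  then have "(y - S) * (y + S) = E" using S2 by (simp add: algebra_simps power2_eq_square)
  moreover have "0 < y + S" using lo \<open>0 < y\<close> by linarith
  ultimately have "\<bar>y - S\<bar> * (y + S) = \<bar>E\<bar>" by (metis abs_mult abs_of_pos)
  moreover have "\<bar>y - S\<bar> * y \<le> \<bar>y - S\<bar> * (y + S)" using lo \<open>0 < y\<close> by (intro mult_left_mono) auto
  ultimately have "\<bar>y - S\<bar> * y \<le> (c * K * y^3) * y"
    using E_le by (simp add: power_def numeral_eq_Suc algebra_simps)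
  then show "\<bar>y - S\<bar> \<le> c * K * y^3" using \<open>0 < y\<close> by simp
qed

lemma near_linear_abs_bounds:
  fixes k K y g1 :: real
  assumes "0 < k" "0 < y" "\<bar>g1 + k * y\<bar> \<le> K * y^3" "K * y^2 \<le> k / 4"
  shows "\<bar>g1 + k * y\<bar> \<le> k * y / 4" "3 * k * y / 4 \<le> \<bar>g1\<bar>" "\<bar>g1\<bar> \<le> 2 * k * y"
proof -
  have "K * y^3 = (K * y^2) * y" by (simp add: power_def numeral_eq_Suc algebra_simps)
  also have "\<dots> \<le> k / 4 * y" using assms by (intro mult_right_mono) auto
  finally show "\<bar>g1 + k * y\<bar> \<le> k * y / 4" using assms(3) by simp
  then show "3 * k * y / 4 \<le> \<bar>g1\<bar>" "\<bar>g1\<bar> \<le> 2 * k * y"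
    using mult_pos_pos[OF assms(1,2)] by linarith+
qed

lemma inverse_slope_approx:
  fixes k K c y S g1 :: real
  assumes "0 < k" "c * k = 2" "0 < y" "y / 2 \<le> S" "\<bar>y - S\<bar> \<le> c * K * y^3"
    and slope: "\<bar>g1 + k * y\<bar> \<le> K * y^3" and small: "K * y^2 \<le> k / 4"
  shows "\<bar>inverse g1 + c / (2 * S)\<bar> \<le> 24 * K / k^2 * S"
proof -
  have S: "0 < S" using assms(3,4) by linarith
  have g1: "3 * k * y / 4 \<le> \<bar>g1\<bar>" using near_linear_abs_bounds[OF assms(1,3) slope small] by simp
  have "g1 \<noteq> 0" using g1 mult_pos_pos[OF assms(1,3)] by auto
  then have eq: "inverse g1 + c / (2 * S) = (k * S + g1) / (k * S * g1)"
    using assms(1,2) S by (simp add: field_simps)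
  have "\<bar>k * S + g1\<bar> \<le> \<bar>g1 + k * y\<bar> + k * \<bar>y - S\<bar>"
  proof -
    have "k * S + g1 = (g1 + k * y) - k * (y - S)" by (simp add: algebra_simps)
    then show ?thesis using abs_triangle_ineq4[of "g1 + k * y" "k * (y - S)"] assms(1) by (simp add: abs_mult)
  qed
  also have "\<dots> \<le> K * y^3 + k * (c * K * y^3)"
    using slope assms(1,5) by (intro add_mono mult_left_mono) auto
  also have "\<dots> = 3 * K * y^3" using assms(2) by (simp add: algebra_simps)
  finally have num: "\<bar>k * S + g1\<bar> \<le> 3 * K * y^3" .
  have "k^2 * y^2 / 4 \<le> k * (y / 2) * (3 * k * y / 4)"
    using assms(1,3) by (simp add: power2_eq_square field_simps)
  also have "\<dots> \<le> k * S * \<bar>g1\<bar>" using assms(1,3,4) g1 by (intro mult_mono mult_left_mono) auto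
  finally have den: "k^2 * y^2 / 4 \<le> \<bar>k * S * g1\<bar>" using assms(1) S by (simp add: abs_mult)
  have "\<bar>inverse g1 + c / (2 * S)\<bar> \<le> 3 * K * y^3 / (k^2 * y^2 / 4)"
    unfolding eq by (rule abs_divide_le_divide[OF num den]) (use assms(1,3) in simp)
  also have "\<dots> = 12 * K / k^2 * y" using assms(1,3) by (simp add: field_simps power_def numeral_eq_Suc)
  also have "\<dots> \<le> 24 * K / k^2 * S"
  proof -
    have "0 \<le> K * y^3" using slope by (meson abs_ge_zero order_trans)
    then have "0 \<le> K" using assms(3) by (simp add: zero_le_mult_iff)
    then have "12 * K / k^2 * y \<le> 12 * K / k^2 * (2 * S)" using assms(4) by (intro mult_left_mono) auto
    then show ?thesis by simp
  qed
  finally show ?thesis .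
qed

lemma curvature_numerator_bound:
  fixes k K c y S g1 g2 :: real
  assumes "0 < k" "c * k = 2" "0 < y" "0 < S" "S \<le> 2 * y" and close: "\<bar>y - S\<bar> \<le> c * K * y^3"
    and slope: "\<bar>g1 + k * y\<bar> \<le> K * y^3" "\<bar>g1\<bar> \<le> 2 * k * y" and curv: "\<bar>g2 + k\<bar> \<le> K * y^2"
  shows "\<bar>- g2 * k^2 * S^3 + g1^3\<bar> \<le> 29 * k^2 * K * y^5"
proof -
  \<comment> \<open>Expand around the model values g1 = -k y, g2 = -k, S = y, for which the numerator vanishes.\<close>
  have expand: "- g2 * k^2 * S^3 + g1^3 = k^3 * ((S - y) * (S^2 + S * y + y^2)) - (g2 + k) * k^2 * S^3
      + (g1 + k * y) * (g1^2 - k * y * g1 + k^2 * y^2)"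
    by (simp add: algebra_simps power2_eq_square power3_eq_cube)
  have "S^2 \<le> (2 * y)^2" using assms(4,5) by (intro power_mono) auto
  moreover have "S * y \<le> 2 * y^2" using assms(3,5) by (simp add: power2_eq_square)
  ultimately have "\<bar>S^2 + S * y + y^2\<bar> \<le> 7 * y^2"
    using assms(3,4) by (simp add: power_mult_distrib)
  then have "\<bar>k^3 * ((S - y) * (S^2 + S * y + y^2))\<bar> \<le> k^3 * ((c * K * y^3) * (7 * y^2))"
    using close assms(1) by (simp add: abs_mult abs_minus_commute mult_left_mono mult_mono)
  also have "\<dots> = 14 * k^2 * K * y^5"
    using assms(2) by (simp add: power_def numeral_eq_Suc algebra_simps)
  finally have t1: "\<bar>k^3 * ((S - y) * (S^2 + S * y + y^2))\<bar> \<le> 14 * k^2 * K * y^5" .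
  have "S^3 \<le> (2 * y)^3" using assms(4,5) by (intro power_mono) auto
  have "\<bar>(g2 + k) * k^2 * S^3\<bar> = \<bar>g2 + k\<bar> * (k^2 * S^3)" using assms(4) by (simp add: abs_mult)
  also have "\<dots> \<le> (K * y^2) * (k^2 * (2 * y)^3)"
    using curv \<open>S^3 \<le> (2 * y)^3\<close> assms(4) by (intro mult_mono mult_left_mono) auto
  also have "\<dots> = 8 * k^2 * K * y^5" by (simp add: power_def numeral_eq_Suc algebra_simps)
  finally have t2: "\<bar>(g2 + k) * k^2 * S^3\<bar> \<le> 8 * k^2 * K * y^5" .
  have "g1^2 \<le> (2 * k * y)^2" using slope(2) by (metis abs_ge_zero power2_abs power_mono)
  moreover have "\<bar>k * y * g1\<bar> \<le> k * y * (2 * k * y)"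
    using slope(2) assms(1,3) by (simp add: abs_mult mult_left_mono)
  moreover have "(2 * k * y)^2 = 4 * (k^2 * y^2)" "k * y * (2 * k * y) = 2 * (k^2 * y^2)"
    by (simp_all add: power_mult_distrib power2_eq_square)
  moreover have "0 \<le> g1^2" "0 \<le> k^2 * y^2" by simp_all
  ultimately have "\<bar>g1^2 - k * y * g1 + k^2 * y^2\<bar> \<le> 7 * k^2 * y^2"
    by (simp only: abs_le_iff) linarith
  then have "\<bar>(g1 + k * y) * (g1^2 - k * y * g1 + k^2 * y^2)\<bar> \<le> (K * y^3) * (7 * k^2 * y^2)"
    unfolding abs_mult using slope(1) by (intro mult_mono) auto
  also have "\<dots> = 7 * k^2 * K * y^5" by (simp add: power_def numeral_eq_Suc algebra_simps)
  finally have t3: "\<bar>(g1 + k * y) * (g1^2 - k * y * g1 + k^2 * y^2)\<bar> \<le> 7 * k^2 * K * y^5" .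
  show ?thesis unfolding expand using t1 t2 t3 by linarith
qed

lemma inverse_curvature_approx:
  fixes k K c y S g1 g2 :: real
  assumes "0 < k" "c * k = 2" "0 < y" "y / 2 \<le> S" "S \<le> 2 * y" "\<bar>y - S\<bar> \<le> c * K * y^3"
    and slope: "\<bar>g1 + k * y\<bar> \<le> K * y^3" and curv: "\<bar>g2 + k\<bar> \<le> K * y^2" and small: "K * y^2 \<le> k / 4"
  shows "\<bar>- g2 / g1^3 + c^2 / (4 * S^3)\<bar> \<le> 4000 * K / k^3 / S"
proof -
  have S: "0 < S" using assms(3,4) by linarith
  note g1 = near_linear_abs_bounds[OF assms(1,3) slope small]
  have "g1 \<noteq> 0" using g1(2) mult_pos_pos[OF assms(1,3)] by auto
  moreover have c: "c = 2 / k" using assms(1,2) by (simp add: field_simps)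
  ultimately have eq: "- g2 / g1^3 + c^2 / (4 * S^3) = (- g2 * k^2 * S^3 + g1^3) / (k^2 * S^3 * g1^3)"
    unfolding c using assms(1) S by (simp add: field_simps)
  have num: "\<bar>- g2 * k^2 * S^3 + g1^3\<bar> \<le> 29 * k^2 * K * y^5"
    using curvature_numerator_bound[OF assms(1-3) S assms(5,6) slope g1(3) curv] .
  have "k^5 * y^6 / 64 \<le> k^2 * ((y / 2)^3 * (3 * k * y / 4)^3)"
    using assms(1,3) by (simp add: power_def numeral_eq_Suc field_simps)
  also have "\<dots> \<le> k^2 * (S^3 * \<bar>g1\<bar>^3)"
    using assms(1,3,4) g1(2) by (intro mult_left_mono mult_mono power_mono) auto
  finally have den: "k^5 * y^6 / 64 \<le> \<bar>k^2 * S^3 * g1^3\<bar>" using S by (simp add: abs_mult power_abs)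
  have "0 \<le> K * y^3" using slope by (meson abs_ge_zero order_trans)
  then have K: "0 \<le> K" using assms(3) by (simp add: zero_le_mult_iff)
  have "\<bar>- g2 / g1^3 + c^2 / (4 * S^3)\<bar> \<le> 29 * k^2 * K * y^5 / (k^5 * y^6 / 64)"
    unfolding eq by (rule abs_divide_le_divide[OF num den]) (use assms(1,3) in simp)
  also have "\<dots> = 1856 * K / k^3 / y" using assms(1,3) by (simp add: field_simps power_def numeral_eq_Suc)
  also have "\<dots> \<le> 2000 * K / k^3 * (2 / S)"
  proof -
    have "1 / y \<le> 2 / S" using assms(3,5) S by (simp add: field_simps)
    then have "1856 * K / k^3 * (1 / y) \<le> 2000 * K / k^3 * (2 / S)"
      using K assms(1,3) S by (intro mult_mono) (auto simp: divide_right_mono)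
    then show ?thesis by simp
  qed
  finally show ?thesis by simp
qed

locale oval_vertex =
  fixes f g :: "real \<Rightarrow> real" and a b :: real
  assumes a_pos: "0 < a" and b_pos: "0 < b"
    and g_even: "\<And>y. y \<in> {-b<..<b} \<Longrightarrow> g (-y) = g y"
    and f_a: "f a = 0" and f_0: "f 0 = b" and f_cont: "continuous_on {-a..a} f"
    and f_decreasing: "\<And>x y. 0 \<le> x \<Longrightarrow> x < y \<Longrightarrow> y \<le> a \<Longrightarrow> f y < f x"
    and g_f: "\<And>x. x \<in> {0..a} \<Longrightarrow> g (f x) = x"
    and f_smooth: "smooth_on {-a<..<a} f" and g_smooth: "smooth_on {-b<..<b} g"
    and g_concave: "\<And>y. y \<in> {-b<..<b} \<Longrightarrow> deriv (deriv g) y < 0"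
begin

definition c :: real where "c = 2 / graph_curv g 0"

(* x = a - y^2 / c is the osculating parabola of the boundary at the vertex (a,0). *)
definition gap :: "real \<Rightarrow> real" where "gap x = f x - sqrt (c * (a - x))"

lemma graph_curv_g_0: "graph_curv g 0 = - deriv (deriv g) 0"
proof -
  have "deriv g 0 = 0"
    using smooth_even_odd_deriv_zero[where r = b and g = g, OF b_pos g_smooth g_even, of 1] by simp
  then show ?thesis using g_concave[of 0] b_pos by (simp add: graph_curv_def)
qed

lemma c_pos: "0 < c"
  using g_concave[of 0] b_pos by (simp add: c_def graph_curv_g_0)

lemma f_range: "x \<in> {0<..<a} \<Longrightarrow> f x \<in> {0<..<b}"
  using f_decreasing[of 0 x] f_decreasing[of x a] f_0 f_a by auto

lemma f_derivatives:
  assumes "x \<in> {-a<..<a}"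
  shows "(f has_real_derivative deriv f x) (at x)"
    and "(deriv f has_real_derivative deriv (deriv f) x) (at x)"
  using smooth_on_has_real_derivative[OF f_smooth assms, of 0]
    smooth_on_has_real_derivative[OF f_smooth assms, of 1] by (simp_all add: numeral_2_eq_2)

lemma g_derivatives:
  assumes "y \<in> {-b<..<b}"
  shows "(g has_real_derivative deriv g y) (at y)"
    and "(deriv g has_real_derivative deriv (deriv g) y) (at y)"
  using smooth_on_has_real_derivative[OF g_smooth assms, of 0]
    smooth_on_has_real_derivative[OF g_smooth assms, of 1] by (simp_all add: numeral_2_eq_2)

lemma deriv_f:
  assumes "x \<in> {0<..<a}"
  shows "deriv f x = inverse (deriv g (f x))"
    and "deriv (deriv f) x = - deriv (deriv g) (f x) / (deriv g (f x))^3"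
proof -
  have fb: "f t \<in> {-b<..<b}" if "t \<in> {0<..<a}" for t using f_range[OF that] by auto
  note inv = inverse_function_derivatives[where U = "{0<..<a}" and f = f and g = g
      and f' = "deriv f" and g' = "deriv g" and f'' = "deriv (deriv f) x" and g'' = "deriv (deriv g) (f x)"]
  show "deriv f x = inverse (deriv g (f x))"
    "deriv (deriv f) x = - deriv (deriv g) (f x) / (deriv g (f x))^3"
    using inv assms g_f f_derivatives g_derivatives fb by auto
qed

lemma gap_derivatives:
  assumes "x \<in> {-a<..<a}"
  shows "(gap has_real_derivative deriv gap x) (at x)"
    and "deriv gap x = deriv f x + c / (2 * sqrt (c * (a - x)))"
    and "(deriv gap has_real_derivative deriv (deriv f) x + c^2 / (4 * sqrt (c * (a - x))^3)) (at x)"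
proof -
  have dgap: "(gap has_real_derivative deriv f t + c / (2 * sqrt (c * (a - t)))) (at t)"
    if "t \<in> {-a<..<a}" for t
    using DERIV_diff[OF f_derivatives(1)[OF that] sqrt_affine_derivatives(1)[OF c_pos, of t a]] that
    unfolding gap_def[abs_def] by auto
  then have deriv_gap: "deriv gap t = deriv f t + c / (2 * sqrt (c * (a - t)))" if "t \<in> {-a<..<a}" for t
    using that by (blast intro: DERIV_imp_deriv)
  show "(gap has_real_derivative deriv gap x) (at x)"
    "deriv gap x = deriv f x + c / (2 * sqrt (c * (a - x)))"
    using dgap[OF assms] deriv_gap[OF assms] by simp_all
  have "((\<lambda>t. deriv f t + c / (2 * sqrt (c * (a - t)))) has_real_derivative
      deriv (deriv f) x + c^2 / (4 * sqrt (c * (a - x))^3)) (at x)"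
    using DERIV_add[OF f_derivatives(2)[OF assms] sqrt_affine_derivatives(2)[OF c_pos, of x a]] assms
    by auto
  then show "(deriv gap has_real_derivative deriv (deriv f) x + c^2 / (4 * sqrt (c * (a - x))^3)) (at x)"
    by (rule has_field_derivative_transform_within_open[OF _ open_greaterThanLessThan assms])
      (simp add: deriv_gap)
qed

lemma eventually_gap_derivative_bounds:
  obtains C1 C2 where "\<forall>\<^sub>F x in at_left a. \<bar>deriv gap x\<bar> \<le> C1 * sqrt (a - x)
    \<and> \<bar>deriv (deriv gap) x\<bar> \<le> C2 / sqrt (a - x)"
proof -
  obtain d K where d: "0 < d" "d < b"
    and taylor: "\<And>y. y \<in> {0<..<d} \<Longrightarrow> \<bar>g y - g 0 - deriv (deriv g) 0 / 2 * y^2\<bar> \<le> K * y^4"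
      "\<And>y. y \<in> {0<..<d} \<Longrightarrow> \<bar>deriv g y - deriv (deriv g) 0 * y\<bar> \<le> K * y^3"
      "\<And>y. y \<in> {0<..<d} \<Longrightarrow> \<bar>deriv (deriv g) y - deriv (deriv g) 0\<bar> \<le> K * y^2"
    using even_smooth_taylor_bounds[where r = b and g = g, OF b_pos g_smooth g_even] by blast
  define k where "k = - deriv (deriv g) 0"
  have k: "0 < k" using g_concave[of 0] b_pos by (simp add: k_def)
  have ck: "c * k = 2" using k by (simp add: c_def graph_curv_g_0 k_def)
  have g_0: "g 0 = a" using g_f[of a] f_a a_pos by simp
  have f_lim: "(f \<longlongrightarrow> 0) (at_left a)"
    using continuous_on_Icc_at_leftD[OF f_cont] a_pos f_a by simp
  have lim: "((\<lambda>x. K * (f x)^2) \<longlongrightarrow> 0) (at_left a)" "((\<lambda>x. c * K * (f x)^2) \<longlongrightarrow> 0) (at_left a)"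
    by (auto intro!: tendsto_eq_intros f_lim)
  have "\<forall>\<^sub>F x in at_left a. K * (f x)^2 < k / 4" by (rule order_tendstoD(2)[OF lim(1)]) (use k in simp)
  moreover have "\<forall>\<^sub>F x in at_left a. c * K * (f x)^2 < 1 / 2" by (rule order_tendstoD(2)[OF lim(2)]) simp
  moreover have "\<forall>\<^sub>F x in at_left a. f x < d" using order_tendstoD(2)[OF f_lim d(1)] .
  moreover have "\<forall>\<^sub>F x in at_left a. x \<in> {0<..<a}" using eventually_at_left_real[OF a_pos] .
  ultimately have "\<forall>\<^sub>F x in at_left a. \<bar>deriv gap x\<bar> \<le> 24 * K / k^2 * sqrt c * sqrt (a - x)
      \<and> \<bar>deriv (deriv gap) x\<bar> \<le> 4000 * K / k^3 / sqrt c / sqrt (a - x)"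
  proof eventually_elim
    case (elim x)
    then have x: "x \<in> {0<..<a}" "f x < d" "K * (f x)^2 \<le> k / 4" "c * K * (f x)^2 \<le> 1 / 2" by auto
    define y where "y = f x"
    define S where "S = sqrt (c * (a - x))"
    have y: "y \<in> {0<..<d}" "g y = x" using x f_range[OF x(1)] g_f[of x] by (auto simp: y_def)
    have quad: "\<bar>x - a + k / 2 * y^2\<bar> \<le> K * y^4"
      using taylor(1)[OF y(1)] y(2) g_0 by (simp add: k_def)
    have slope: "\<bar>deriv g y + k * y\<bar> \<le> K * y^3" and curv: "\<bar>deriv (deriv g) y + k\<bar> \<le> K * y^2"
      using taylor(2,3)[OF y(1)] by (simp_all add: k_def)
    note sq = sqrt_quadratic_approx[OF k ck _ quad x(4)[folded y_def], folded S_def]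
    have "\<bar>deriv gap x\<bar> \<le> 24 * K / k^2 * S"
      using inverse_slope_approx[OF k ck _ sq(2,4) slope x(3)[folded y_def]] x y
      by (simp add: gap_derivatives(2) deriv_f(1) S_def y_def)
    moreover have "\<bar>deriv (deriv gap) x\<bar> \<le> 4000 * K / k^3 / S"
      using inverse_curvature_approx[OF k ck _ sq(2,3,4) slope curv x(3)[folded y_def]] x y
        DERIV_imp_deriv[OF gap_derivatives(3)]
      by (simp add: deriv_f(2) S_def y_def)
    moreover have "S = sqrt c * sqrt (a - x)" by (simp add: S_def real_sqrt_mult)
    ultimately show "\<bar>deriv gap x\<bar> \<le> 24 * K / k^2 * sqrt c * sqrt (a - x)
      \<and> \<bar>deriv (deriv gap) x\<bar> \<le> 4000 * K / k^3 / sqrt c / sqrt (a - x)"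
      by (simp add: mult.assoc)
  qed
  then show thesis by (rule that)
qed

lemma gap_tendsto_at_vertex: "(gap \<longlongrightarrow> gap a) (at_left a)"
  using continuous_on_Icc_at_leftD[OF f_cont] a_pos unfolding gap_def[abs_def]
  by (auto intro!: tendsto_eq_intros)

lemma deriv2_gap_continuous: "continuous_on {0..<a} (deriv (deriv gap))"
proof -
  have "isCont (\<lambda>x. deriv (deriv f) x + c^2 / (4 * sqrt (c * (a - x))^3)) x" if "x \<in> {-a<..<a}" for x
    using smooth_on_has_real_derivative[OF f_smooth that, of 2, THEN DERIV_isCont] that c_pos
    by (intro continuous_intros) (auto simp: numeral_2_eq_2)
  then have "continuous_on {-a<..<a} (\<lambda>x. deriv (deriv f) x + c^2 / (4 * sqrt (c * (a - x))^3))"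
    by (intro continuous_at_imp_continuous_on) blast
  then have "continuous_on {-a<..<a} (deriv (deriv gap))"
    by (rule continuous_on_cong[THEN iffD1, rotated 2]) (simp_all add: DERIV_imp_deriv[OF gap_derivatives(3)])
  then show ?thesis by (rule continuous_on_subset) (use a_pos in auto)
qed

lemma gap_vertex_behaviour:
  shows "deriv gap \<in> O[at_left a](\<lambda>x. sqrt (a - x))"
    and "(gap has_real_derivative 0) (at_left a)"
    and "deriv (deriv gap) \<in> O[at_left a](\<lambda>x. 1 / sqrt (a - x))"
    and "deriv (deriv gap) absolutely_integrable_on {0<..<a}"
proof -
  obtain C1 C2 where "\<forall>\<^sub>F x in at_left a. \<bar>deriv gap x\<bar> \<le> C1 * sqrt (a - x)
    \<and> \<bar>deriv (deriv gap) x\<bar> \<le> C2 / sqrt (a - x)"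
    by (rule eventually_gap_derivative_bounds)
  then have bounds: "\<forall>\<^sub>F x in at_left a. norm (deriv gap x) \<le> C1 * norm (sqrt (a - x))
    \<and> norm (deriv (deriv gap) x) \<le> C2 * norm (1 / sqrt (a - x))"
    using eventually_at_left_real[OF a_pos] by eventually_elim auto
  show "deriv gap \<in> O[at_left a](\<lambda>x. sqrt (a - x))"
    using bounds by (intro bigoI[where c = C1]) (auto elim: eventually_mono)
  show O2: "deriv (deriv gap) \<in> O[at_left a](\<lambda>x. 1 / sqrt (a - x))"
    using bounds by (intro bigoI[where c = C2]) (auto elim: eventually_mono)
  have "(deriv gap \<longlongrightarrow> 0) (at_left a)"
  proof (rule Lim_null_comparison)
    show "\<forall>\<^sub>F x in at_left a. norm (deriv gap x) \<le> C1 * norm (sqrt (a - x))"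
      using bounds by (auto elim: eventually_mono)
    show "((\<lambda>x. C1 * norm (sqrt (a - x))) \<longlongrightarrow> 0) (at_left a)"
      by (auto intro!: tendsto_eq_intros)
  qed
  then show "(gap has_real_derivative 0) (at_left a)"
    using a_pos gap_derivatives(1)
    by (intro has_real_derivative_at_left_of_deriv_limit[OF a_pos gap_tendsto_at_vertex]) auto
  show "deriv (deriv gap) absolutely_integrable_on {0<..<a}"
    by (rule absolutely_integrable_on_Ioo_if_bigo_inverse_sqrt[OF a_pos deriv2_gap_continuous O2])
qed

end

lemma symmetric_oval_vertex_a0:
  assumes "symmetric_oval f g a b"
  shows "oval_vertex f g a b"
proof -
  from assms[unfolded symmetric_oval_def] show ?thesis
    by (elim conjE, unfold_locales) (simp_all add: subset_eq)
qed

lemma symmetric_oval_vertex_0b: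
  assumes "symmetric_oval f g a b"
  shows "oval_vertex g f b a"
proof -
  note oval = assms[unfolded symmetric_oval_def]
  have f_decreasing: "\<And>x y. 0 \<le> x \<Longrightarrow> x < y \<Longrightarrow> y \<le> a \<Longrightarrow> f y < f x"
    and g_f: "\<And>x. x \<in> {0..a} \<Longrightarrow> g (f x) = x"
    and f_g: "\<And>y. y \<in> {0..b} \<Longrightarrow> g y \<in> {0..a} \<and> f (g y) = y"
    using oval by blast+
  have "g y < g x" if "0 \<le> x" "x < y" "y \<le> b" for x y
  proof (rule ccontr)
    assume "\<not> g y < g x"
    then consider "g x = g y" | "g x < g y" by linarith
    then show False
    proof cases
      case 1
      then show False using f_g[of x] f_g[of y] that by auto
    next
      case 2
      then show False using f_decreasing[of "g x" "g y"] f_g[of x] f_g[of y] that by auto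
    qed
  qed
  moreover have "g b = 0" "g 0 = a" using g_f[of 0] g_f[of a] oval by auto
  ultimately show ?thesis using oval f_g by (elim conjE, unfold_locales) (simp_all add: subset_eq)
qed

theorem lemma2p2:
  fixes f g :: "real \<Rightarrow> real" and a b :: real
  assumes oval: "symmetric_oval f g a b"
  defines "A \<equiv> (\<lambda>x. f x - sqrt (2 / kappa_a0 g * (a - x)))"
      and "B \<equiv> (\<lambda>y. g y - sqrt (2 / kappa_0b f * (b - y)))"
  shows "(\<lambda>x. deriv A x) \<in> O[at_left a](\<lambda>x. sqrt (a - x))
       \<and> (A has_real_derivative 0) (at_left a)
       \<and> (\<lambda>x. deriv (deriv A) x) \<in> O[at_left a](\<lambda>x. 1 / sqrt (a - x))
       \<and> (\<lambda>x. deriv (deriv A) x) absolutely_integrable_on {0<..<a}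
       \<and> (B has_real_derivative 0) (at_left b)
       \<and> (\<lambda>y. deriv (deriv B) y) absolutely_integrable_on {0<..<b}"
proof -
  interpret vertex_a0: oval_vertex f g a b using symmetric_oval_vertex_a0[OF oval] .
  interpret vertex_0b: oval_vertex g f b a using symmetric_oval_vertex_0b[OF oval] .
  have "A = vertex_a0.gap"
    unfolding A_def vertex_a0.gap_def[abs_def] vertex_a0.c_def kappa_a0_def ..
  moreover have "B = vertex_0b.gap"
    unfolding B_def vertex_0b.gap_def[abs_def] vertex_0b.c_def kappa_0b_def ..
  ultimately show ?thesis
    using vertex_a0.gap_vertex_behaviour vertex_0b.gap_vertex_behaviour(2,4) by simp
qed

end
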